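(* Let $\Gamma=(N,A,u)$ be a game with $N=\{1,\dots,n\}$ and $A_i=A_j$ for all $i,j\in N$. Then $\Gamma$ is VNM symmetric if and only if for each transposition $\pi\in S_N$ we have $u_i(s_1,\dots,s_n)=u_{\pi(i)}(s_{\pi(1)},\dots,s_{\pi(n)})$ for all $i\in N$ and $(s_1,\dots,s_n)\in A$.
   Context: A (finite normal-form) game $\Gamma=(N,A,u)$ consists of a finite set $N$ of at least two players, a finite non-empty strategy set $A_i$ for each $i\in N$, $A=\times_{i\in N}A_i$, and utility functions $u_i:A\to\mathbb{R}$. $\Gamma$ is VNM symmetric if $A_i=A_j$ for all $i,j\in N$ and, for each permutation $\pi\in S_N$, $u_{\pi(i)}(s_1,\dots,s_n)=u_i(s_{\pi(1)},\dots,s_{\pi(n)})$ for all $i\in N$ and $(s_1,\dots,s_n)\in A$. *)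

theory Defs
  imports "HOL-Combinatorics.Combinatorics" "HOL-Library.FuncSet"
begin

text \<open>Strategy profiles are the extensional functions
  in PiE {1..n} (\<lambda>_. S); utility of player i at profile s is u i s.\<close>

definition game :: "nat \<Rightarrow> 'a set \<Rightarrow> (nat \<Rightarrow> (nat \<Rightarrow> 'a) \<Rightarrow> real) \<Rightarrow> bool" where
  "game n S u \<longleftrightarrow> 2 \<le> n \<and> finite S \<and> S \<noteq> {}"

definition profiles :: "nat \<Rightarrow> 'a set \<Rightarrow> (nat \<Rightarrow> 'a) set" where
  "profiles n S = PiE {1..n} (\<lambda>_. S)"

text \<open>VNM symmetry: for every permutation pi of N, u_(pi i)(s_1..s_n) = u_i(s_(pi 1)..s_(pi n)).
  The permuted profile (s_(pi 1),...,s_(pi n)) is s o pi.\<close>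

definition vnm_symmetric :: "nat \<Rightarrow> 'a set \<Rightarrow> (nat \<Rightarrow> (nat \<Rightarrow> 'a) \<Rightarrow> real) \<Rightarrow> bool" where
  "vnm_symmetric n S u \<longleftrightarrow>
     (\<forall>\<pi>. \<pi> permutes {1..n} \<longrightarrow>
        (\<forall>i\<in>{1..n}. \<forall>s\<in>profiles n S. u (\<pi> i) s = u i (s \<circ> \<pi>)))"

end

theory Submission
  imports Defs
begin

text \<open>The permutations \<pi> of the players for which u (\<pi> i) s = u i (s \<circ> \<pi>) holds form a
  monoid under composition, and for a transposition the condition is symmetric in the two
  sides because a transposition is an involution. Since every permutation of a finite set
  is a product of transpositions, invariance under the transpositions already gives
  invariance under all permutations.\<close>

definition utility_invariant ::
    "'i set \<Rightarrow> 'a set \<Rightarrow> ('i \<Rightarrow> ('i \<Rightarrow> 'a) \<Rightarrow> 'b) \<Rightarrow> ('i \<Rightarrow> 'i) \<Rightarrow> bool" where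
  "utility_invariant I S u \<pi> \<longleftrightarrow> (\<forall>i\<in>I. \<forall>s\<in>PiE I (\<lambda>_. S). u (\<pi> i) s = u i (s \<circ> \<pi>))"

lemma vnm_symmetric_iff_utility_invariant:
  "vnm_symmetric n S u \<longleftrightarrow> (\<forall>\<pi>. \<pi> permutes {1..n} \<longrightarrow> utility_invariant {1..n} S u \<pi>)"
  unfolding vnm_symmetric_def utility_invariant_def profiles_def ..

lemma comp_permutes_in_PiE:
  assumes "p permutes I" "s \<in> PiE I (\<lambda>_. S)"
  shows "s \<circ> p \<in> PiE I (\<lambda>_. S)"
  using assms permutes_in_image[OF assms(1)] permutes_not_in[OF assms(1)]
  by (auto simp: PiE_iff extensional_def)

lemma utility_invariant_id: "utility_invariant I S u id"
  by (simp add: utility_invariant_def)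

lemma utility_invariant_comp:
  assumes "\<sigma> permutes I" "\<tau> permutes I"
    and "utility_invariant I S u \<sigma>" "utility_invariant I S u \<tau>"
  shows "utility_invariant I S u (\<sigma> \<circ> \<tau>)"
  unfolding utility_invariant_def
proof (intro ballI)
  fix i s assume i: "i \<in> I" and s: "s \<in> PiE I (\<lambda>_. S)"
  have "u (\<sigma> (\<tau> i)) s = u (\<tau> i) (s \<circ> \<sigma>)"
    using assms(3) permutes_in_image[OF assms(2)] i s by (auto simp: utility_invariant_def)
  also have "\<dots> = u i (s \<circ> \<sigma> \<circ> \<tau>)"
    using assms(4) i comp_permutes_in_PiE[OF assms(1) s] by (auto simp: utility_invariant_def)
  finally show "u ((\<sigma> \<circ> \<tau>) i) s = u i (s \<circ> (\<sigma> \<circ> \<tau>))"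
    by (simp add: comp_assoc)
qed

lemma utility_invariant_transpose_iff:
  assumes "a \<in> I" "b \<in> I"
  shows "utility_invariant I S u (transpose a b) \<longleftrightarrow>
    (\<forall>i\<in>I. \<forall>s\<in>PiE I (\<lambda>_. S). u i s = u (transpose a b i) (s \<circ> transpose a b))"
proof -
  have "transpose a b i \<in> I \<longleftrightarrow> i \<in> I" for i
    using permutes_in_image[OF permutes_swap_id[OF assms]] .
  then show ?thesis
    unfolding utility_invariant_def by (metis transpose_involutory)
qed

lemma utility_invariant_all_permutations_iff_transpositions:
  assumes "finite I"
  shows "(\<forall>\<pi>. \<pi> permutes I \<longrightarrow> utility_invariant I S u \<pi>) \<longleftrightarrow>
    (\<forall>a\<in>I. \<forall>b\<in>I. a \<noteq> b \<longrightarrow> utility_invariant I S u (transpose a b))"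
proof
  assume "\<forall>\<pi>. \<pi> permutes I \<longrightarrow> utility_invariant I S u \<pi>"
  then show "\<forall>a\<in>I. \<forall>b\<in>I. a \<noteq> b \<longrightarrow> utility_invariant I S u (transpose a b)"
    by (simp add: permutes_swap_id)
next
  assume transpositions: "\<forall>a\<in>I. \<forall>b\<in>I. a \<noteq> b \<longrightarrow> utility_invariant I S u (transpose a b)"
  show "\<forall>\<pi>. \<pi> permutes I \<longrightarrow> utility_invariant I S u \<pi>"
  proof (intro allI impI)
    fix \<pi> assume "\<pi> permutes I"
    from this assms show "utility_invariant I S u \<pi>"
    proof (induction rule: permutes_induct)
      case id
      show ?case by (rule utility_invariant_id)
    next
      case (swap a b p)
      show ?case
        using swap transpositions by (intro utility_invariant_comp permutes_swap_id) auto
    qed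
  qed
qed

theorem mainTheorem17:
  fixes n :: nat and S :: "'a set" and u :: "nat \<Rightarrow> (nat \<Rightarrow> 'a) \<Rightarrow> real"
  assumes "game n S u"
  shows "vnm_symmetric n S u \<longleftrightarrow>
    (\<forall>a\<in>{1..n}. \<forall>b\<in>{1..n}. a \<noteq> b \<longrightarrow>
       (\<forall>i\<in>{1..n}. \<forall>s\<in>profiles n S.
          u i s = u (transpose a b i) (s \<circ> transpose a b)))"
  unfolding vnm_symmetric_iff_utility_invariant profiles_def
  by (simp add: utility_invariant_all_permutations_iff_transpositions
      utility_invariant_transpose_iff)

end
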